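(* Let $G$ be a finite group and $H \leqslant G$. If $|HP|$ divides $|G|$ for every Sylow subgroup $P$ of $G$ (for every prime), then $|HK|$ divides $|G|$ for every subgroup $K \leqslant G$.
   Context: For subgroups $A,B$, $AB$ denotes the product set $\{ab : a \in A, b \in B\}$. *)

theory Defs
  imports "HOL-Algebra.Algebra"
begin

definition sylow_subgroup :: "('a, 'b) monoid_scheme \<Rightarrow> nat \<Rightarrow> 'a set \<Rightarrow> bool" where
  "sylow_subgroup G p P \<longleftrightarrow> Factorial_Ring.prime p \<and> subgroup P G \<and> card P = p ^ multiplicity p (order G)"

end

theory Submission
  imports Defs
begin

(*
  Compare p-parts for every prime p. By the product formula |HK| |H \<inter> K| = |H| |K| it suffices
  to show v(|H|) + v(|K|) \<le> v(|G|) + v(|H \<inter> K|), where v is the p-adic valuation.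
  Choose a Sylow p-subgroup R of K and a Sylow p-subgroup P of G containing R. Applying the
  product formula to H and P, the hypothesis that |HP| divides |G| implies that p^v(|H|)
  divides |H \<inter> P|. Since (H \<inter> P)R \<subseteq> P, the product formula once more gives
  |H \<inter> P| |R| \<le> |P| |H \<inter> R|, and H \<inter> R is a p-subgroup of H \<inter> K.
*)

lemma prime_power_dvd_le_multiplicity:
  fixes p d n :: nat
  assumes p: "Factorial_Ring.prime p" and "d dvd p ^ k" and "d dvd n" and "n \<noteq> 0"
  shows "d \<le> p ^ multiplicity p n"
proof -
  obtain j where d: "d = p ^ j" using divides_primepow_nat[OF p] assms(2) by auto
  then have "j \<le> multiplicity p n" using assms p by (intro multiplicity_geI) auto
  then show ?thesis using d prime_gt_1_nat[OF p] by (simp add: power_increasing)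
qed

lemma (in group) card_mult_fibre:
  assumes H: "subgroup H G" and K: "subgroup K G" and h0: "h0 \<in> H" and k0: "k0 \<in> K"
  shows "card {(h, k) \<in> H \<times> K. h \<otimes> k = h0 \<otimes> k0} = card (H \<inter> K)"
proof -
  let ?F = "{(h, k) \<in> H \<times> K. h \<otimes> k = h0 \<otimes> k0}"
  have h0c: "h0 \<in> carrier G" and k0c: "k0 \<in> carrier G"
    using subgroup.mem_carrier[OF H h0] subgroup.mem_carrier[OF K k0] .
  have "bij_betw (\<lambda>t. (h0 \<otimes> t, inv t \<otimes> k0)) (H \<inter> K) ?F"
  proof (rule bij_betwI')
    fix s t assume "s \<in> H \<inter> K" "t \<in> H \<inter> K"
    then have "s \<in> carrier G" "t \<in> carrier G" using subgroup.mem_carrier[OF H] by auto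
    then show "((h0 \<otimes> s, inv s \<otimes> k0) = (h0 \<otimes> t, inv t \<otimes> k0)) = (s = t)"
      using h0c by auto
  next
    fix t assume t: "t \<in> H \<inter> K"
    then have "t \<in> carrier G" using subgroup.mem_carrier[OF H] by auto
    then have "h0 \<otimes> t \<otimes> (inv t \<otimes> k0) = h0 \<otimes> k0"
      using h0c k0c by (metis inv_closed m_assoc m_closed r_inv r_one)
    with t h0 k0 show "(h0 \<otimes> t, inv t \<otimes> k0) \<in> ?F"
      by (auto intro: subgroup.m_closed subgroup.m_inv_closed H K)
  next
    fix y assume "y \<in> ?F"
    then obtain h k where y: "y = (h, k)" and h: "h \<in> H" and k: "k \<in> K"
      and hk: "h \<otimes> k = h0 \<otimes> k0"
      by auto
    have hc: "h \<in> carrier G" and kc: "k \<in> carrier G"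
      using subgroup.mem_carrier[OF H h] subgroup.mem_carrier[OF K k] .
    define t where "t = inv h0 \<otimes> h"
    have "k0 \<otimes> inv k = inv h0 \<otimes> (h0 \<otimes> k0) \<otimes> inv k"
      using h0c k0c by (simp add: m_assoc[symmetric])
    also have "\<dots> = inv h0 \<otimes> (h \<otimes> k) \<otimes> inv k" using hk by simp
    also have "\<dots> = t" unfolding t_def using h0c hc kc by (simp add: m_assoc)
    finally have t_alt: "t = k0 \<otimes> inv k" ..
    have "t \<in> H" unfolding t_def by (simp add: H h h0 subgroup.m_closed subgroup.m_inv_closed)
    moreover have "t \<in> K" unfolding t_alt by (simp add: K k k0 subgroup.m_closed subgroup.m_inv_closed)
    moreover have "h0 \<otimes> t = h" unfolding t_def using h0c hc by (simp add: m_assoc[symmetric])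
    moreover have "inv t \<otimes> k0 = k" unfolding t_alt using k0c kc by (simp add: inv_mult_group m_assoc)
    ultimately show "\<exists>t\<in>H \<inter> K. y = (h0 \<otimes> t, inv t \<otimes> k0)" using y by auto
  qed
  then show ?thesis by (simp add: bij_betw_same_card)
qed

lemma (in group) card_set_mult_mult_card_Int:
  assumes H: "subgroup H G" and K: "subgroup K G" and fH: "finite H" and fK: "finite K"
  shows "card (H <#> K) * card (H \<inter> K) = card H * card K"
proof -
  define fibre where "fibre x = {(h, k) \<in> H \<times> K. h \<otimes> k = x}" for x
  have card_fibre: "card (fibre x) = card (H \<inter> K)" if "x \<in> H <#> K" for x
    using that card_mult_fibre[OF H K] unfolding fibre_def set_mult_def by auto
  have partition: "H \<times> K = (\<Union>x\<in>H <#> K. fibre x)"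
    unfolding fibre_def set_mult_def by auto
  have "card (H \<times> K) = (\<Sum>x\<in>H <#> K. card (fibre x))"
    unfolding partition
  proof (rule card_UN_disjoint)
    show "finite (H <#> K)" unfolding set_mult_def using fH fK by auto
    have "finite (fibre x)" for x
      by (rule finite_subset[OF _ finite_cartesian_product[OF fH fK]]) (auto simp: fibre_def)
    then show "\<forall>x\<in>H <#> K. finite (fibre x)" ..
    show "\<forall>x\<in>H <#> K. \<forall>y\<in>H <#> K. x \<noteq> y \<longrightarrow> fibre x \<inter> fibre y = {}"
      unfolding fibre_def by auto
  qed
  also have "\<dots> = card (H <#> K) * card (H \<inter> K)" using card_fibre by simp
  finally show ?thesis by (simp add: card_cartesian_product)
qed

lemma (in group) multiplicity_card_set_mult:
  assumes H: "subgroup H G" and K: "subgroup K G" and fH: "finite H" and fK: "finite K"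
    and p: "prime_elem p"
  shows "multiplicity p (card (H <#> K)) + multiplicity p (card (H \<inter> K))
    = multiplicity p (card H) + multiplicity p (card K)"
proof -
  have prod: "card (H <#> K) * card (H \<inter> K) = card H * card K"
    using card_set_mult_mult_card_Int[OF H K fH fK] .
  have "card H \<noteq> 0" "card K \<noteq> 0"
    using fH fK subgroup.one_closed[OF H] subgroup.one_closed[OF K] by (auto simp: card_eq_0_iff)
  moreover from this have "card (H <#> K) \<noteq> 0" "card (H \<inter> K) \<noteq> 0"
    using prod by (metis mult_eq_0_iff)+
  ultimately show ?thesis
    using arg_cong[OF prod, of "multiplicity p"] by (simp add: prime_elem_multiplicity_mult_distrib[OF p])
qed

lemma (in group) card_Int_mult_card_le:
  assumes H: "subgroup H G" and P: "subgroup P G" and R: "subgroup R G"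
    and R_P: "R \<subseteq> P" and fin_P: "finite P"
  shows "card (H \<inter> P) * card R \<le> card P * card (H \<inter> R)"
proof -
  have HP: "subgroup (H \<inter> P) G" using subgroups_Inter_pair[OF H P] .
  have fin_R: "finite R" and fin_HP: "finite (H \<inter> P)"
    using fin_P R_P finite_subset by auto
  have "(H \<inter> P) <#> R \<subseteq> P"
    unfolding set_mult_def using R_P subgroup.m_closed[OF P] by blast
  then have "card ((H \<inter> P) <#> R) \<le> card P" using fin_P by (rule card_mono[rotated])
  moreover have "H \<inter> P \<inter> R = H \<inter> R" using R_P by auto
  ultimately show ?thesis
    using card_set_mult_mult_card_Int[OF HP R fin_HP fin_R] by (metis mult_le_mono1)
qed

lemma (in group) card_subgroup_dvd:
  assumes "subgroup I G" and "subgroup J G" and "I \<subseteq> J"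
  shows "card I dvd card J"
proof -
  have "subgroup I (G\<lparr>carrier := J\<rparr>)" using subgroup_incl assms by blast
  then have "card (rcosets\<^bsub>G\<lparr>carrier := J\<rparr>\<^esub> I) * card I = card J"
    using group.lagrange[OF subgroup_imp_group[OF assms(2)]] by (simp add: order_def)
  then show ?thesis by (metis dvd_triv_right)
qed

lemma (in group_action) p_group_fixed_point:
  assumes fin: "finite E" and p: "Factorial_Ring.prime p" and order: "order G = p ^ k"
    and not_dvd: "\<not> p dvd card E"
  shows "\<exists>x\<in>E. \<forall>g\<in>carrier G. \<phi> g x = x"
proof -
  have "\<exists>x\<in>E. card (orbit G \<phi> x) = 1"
  proof (rule ccontr)
    assume no_singleton: "\<not> ?thesis"
    have "p dvd card orb" if orb_in: "orb \<in> orbits G E \<phi>" for orb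
    proof -
      obtain x where x: "x \<in> E" and orb: "orb = orbit G \<phi> x"
        using orb_in unfolding orbits_def by auto
      have "card orb dvd p ^ k"
        using orbit_stabilizer_theorem[OF x] order orb by (metis dvd_triv_left)
      then obtain i where i: "card orb = p ^ i" using divides_primepow_nat[OF p] by auto
      with no_singleton x orb have "i \<noteq> 0" by auto
      then show ?thesis using i by (simp add: dvd_power)
    qed
    then have "p dvd (\<Sum>orb\<in>orbits G E \<phi>. card orb)" by (simp add: dvd_sum)
    moreover have "(\<Sum>orb\<in>orbits G E \<phi>. card orb) = card E"
      using disjoint_sum[OF fin, of "\<lambda>_. 1::nat"] by simp
    ultimately show False using not_dvd by simp
  qed
  then obtain x where x: "x \<in> E" and "card (orbit G \<phi> x) = 1" by blast
  then obtain z where "orbit G \<phi> x = {z}" using card_1_singletonE by blast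
  then have "orbit G \<phi> x = {x}" using orbit_refl[OF x] by simp
  then show ?thesis using x unfolding orbit_def by blast
qed

text \<open>Right multiplication by \<open>inv g\<close> makes the action on right cosets a left action.\<close>
abbreviation (in group) rcoset_action :: "'a set \<Rightarrow> 'a \<Rightarrow> 'a set \<Rightarrow> 'a set"
  where "rcoset_action P g \<equiv> \<lambda>Y\<in>rcosets P. Y #> inv g"

lemma (in group) group_action_rcoset_action:
  assumes P: "subgroup P G"
  shows "group_action G (rcosets P) (rcoset_action P)"
proof -
  let ?E = "rcosets P"
  have Y_carrier: "Y \<subseteq> carrier G" if "Y \<in> ?E" for Y
    using that P rcosets_part_G by blast
  have closed: "Y #> g \<in> ?E" if Y: "Y \<in> ?E" and g: "g \<in> carrier G" for Y g
  proof -
    obtain a where a: "a \<in> carrier G" "Y = P #> a" using Y unfolding RCOSETS_def by auto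
    then have "Y #> g = P #> (a \<otimes> g)" using coset_mult_assoc subgroup.subset[OF P] g by simp
    then show ?thesis using a g unfolding RCOSETS_def by auto
  qed
  have bij: "rcoset_action P g \<in> Bij ?E" if g: "g \<in> carrier G" for g
  proof -
    have "bij_betw (rcoset_action P g) ?E ?E"
    proof (rule bij_betw_byWitness[where f' = "\<lambda>Y. Y #> g"])
      show "\<forall>Y\<in>?E. rcoset_action P g Y #> g = Y" and "\<forall>Y\<in>?E. rcoset_action P g (Y #> g) = Y"
        using Y_carrier g closed by (simp_all add: coset_mult_assoc)
      show "rcoset_action P g ` ?E \<subseteq> ?E" and "(\<lambda>Y. Y #> g) ` ?E \<subseteq> ?E"
        using closed g by auto
    qed
    then show ?thesis unfolding Bij_def by auto
  qed
  have hom: "rcoset_action P (x \<otimes> y) = rcoset_action P x \<otimes>\<^bsub>BijGroup ?E\<^esub> rcoset_action P y"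
    if x: "x \<in> carrier G" and y: "y \<in> carrier G" for x y
  proof -
    have "rcoset_action P (x \<otimes> y) Y = compose ?E (rcoset_action P x) (rcoset_action P y) Y" for Y
      using x y closed Y_carrier by (auto simp: compose_def inv_mult_group coset_mult_assoc)
    then have "rcoset_action P (x \<otimes> y) = compose ?E (rcoset_action P x) (rcoset_action P y)" ..
    then show ?thesis using bij x y by (simp add: BijGroup_def)
  qed
  show ?thesis
    unfolding group_action_def group_hom_def group_hom_axioms_def hom_def
    using bij hom is_group group_BijGroup by (auto simp: BijGroup_def)
qed

lemma (in group) card_stabilizer_rcoset:
  assumes fin: "finite (carrier G)" and P: "subgroup P G" and x: "x \<in> rcosets P"
  shows "card (stabilizer G (rcoset_action P) x) = card P"
proof -
  interpret group_action G "rcosets P" "rcoset_action P" using group_action_rcoset_action[OF P] .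
  obtain g where g: "g \<in> carrier G" and x_eq: "x = P #> g" using x unfolding RCOSETS_def by auto
  have "rcosets P \<subseteq> orbit G (rcoset_action P) x"
  proof
    fix Y assume "Y \<in> rcosets P"
    then obtain b where b: "b \<in> carrier G" and Y: "Y = P #> b" unfolding RCOSETS_def by auto
    have "rcoset_action P (inv b \<otimes> g) x = P #> (g \<otimes> (inv g \<otimes> b))"
      using x x_eq g b subgroup.subset[OF P] by (simp add: inv_mult_group coset_mult_assoc)
    also have "\<dots> = Y" using g b Y by (simp add: m_assoc[symmetric])
    finally show "Y \<in> orbit G (rcoset_action P) x" using g b unfolding orbit_def by blast
  qed
  moreover have "orbit G (rcoset_action P) x \<subseteq> rcosets P"
    using x element_image unfolding orbit_def by blast
  ultimately have "card (rcosets P) * card (stabilizer G (rcoset_action P) x)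
      = card (rcosets P) * card P"
    using orbit_stabilizer_theorem[OF x] lagrange[OF P] by (simp add: mult.commute)
  moreover have "card (rcosets P) \<noteq> 0"
    using x fin rcosets_subset_PowG[OF P] by (auto simp: card_eq_0_iff dest: finite_subset)
  ultimately show ?thesis by simp
qed

lemma (in group) p_subgroup_le_sylow_subgroup:
  assumes fin: "finite (carrier G)" and p: "Factorial_Ring.prime p"
    and Q: "subgroup Q G" and card_Q: "card Q = p ^ k"
  shows "\<exists>P. sylow_subgroup G p P \<and> Q \<subseteq> P"
proof -
  define a where "a = multiplicity p (order G)"
  obtain m where order: "order G = p ^ a * m" and "\<not> p dvd m"
    unfolding a_def
  proof (rule multiplicity_decompose')
    show "order G \<noteq> 0" using fin order_gt_0_iff_finite by simp
    show "\<not> is_unit p" using prime_gt_1_nat[OF p] by simp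
  qed
  obtain P0 where P0: "subgroup P0 G" "card P0 = p ^ a"
    using sylow_thm[OF p is_group order fin] by blast
  interpret group_action G "rcosets P0" "rcoset_action P0"
    using group_action_rcoset_action[OF P0(1)] .
  interpret Q_action: group_action "G\<lparr>carrier := Q\<rparr>" "rcosets P0" "rcoset_action P0"
    using induced_action[OF Q] .
  have "card (rcosets P0) * p ^ a = m * p ^ a"
    using lagrange[OF P0(1)] P0(2) order by (metis mult.commute)
  then have not_dvd: "\<not> p dvd card (rcosets P0)"
    using \<open>\<not> p dvd m\<close> prime_gt_0_nat[OF p] by simp
  have fin_rcosets: "finite (rcosets P0)"
    using fin rcosets_subset_PowG[OF P0(1)] by (meson finite_Pow_iff finite_subset)
  have order_Q: "order (G\<lparr>carrier := Q\<rparr>) = p ^ k" using card_Q by (simp add: order_def)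
  obtain x where x: "x \<in> rcosets P0" and fixed: "\<forall>q\<in>Q. rcoset_action P0 q x = x"
    using Q_action.p_group_fixed_point[OF fin_rcosets p order_Q not_dvd] by auto
  \<comment> \<open>The stabilizer of a coset of \<open>P0\<close> is a conjugate of \<open>P0\<close>.\<close>
  define P where "P = stabilizer G (rcoset_action P0) x"
  have "sylow_subgroup G p P"
    unfolding sylow_subgroup_def P_def
    using p stabilizer_subgroup[OF x] card_stabilizer_rcoset[OF fin P0(1) x] P0(2) a_def by simp
  moreover have "Q \<subseteq> P"
    unfolding P_def stabilizer_def using fixed subgroup.subset[OF Q] by auto
  ultimately show ?thesis by blast
qed

lemma (in group) sylow_subgroup_of_subgroup:
  assumes fin: "finite (carrier G)" and p: "Factorial_Ring.prime p" and K: "subgroup K G"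
  obtains R where "subgroup R G" "R \<subseteq> K" "card R = p ^ multiplicity p (card K)"
proof -
  interpret K: group "G\<lparr>carrier := K\<rparr>" using subgroup_imp_group[OF K] .
  have "finite K" using fin subgroup.subset[OF K] finite_subset by blast
  then obtain R where "sylow_subgroup (G\<lparr>carrier := K\<rparr>) p R"
    using K.p_subgroup_le_sylow_subgroup[OF _ p K.triv_subgroup, of 0] by auto
  then have "subgroup R (G\<lparr>carrier := K\<rparr>)" "card R = p ^ multiplicity p (card K)"
    unfolding sylow_subgroup_def order_def by auto
  then show ?thesis
    using that incl_subgroup[OF K] subgroup.subset by force
qed

lemma (in group) multiplicity_card_le_card_Int_sylow:
  assumes fin: "finite (carrier G)" and H: "subgroup H G"
    and P: "sylow_subgroup G p P" and dvd: "card (H <#> P) dvd order G"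
  shows "multiplicity p (card H) \<le> multiplicity p (card (H \<inter> P))"
proof -
  have p: "prime_elem p" and P_sub: "subgroup P G" and card_P: "card P = p ^ multiplicity p (order G)"
    using P unfolding sylow_subgroup_def by auto
  have "finite H" "finite P"
    using fin subgroup.subset[OF H] subgroup.subset[OF P_sub] finite_subset by auto
  then have "multiplicity p (card (H <#> P)) + multiplicity p (card (H \<inter> P))
      = multiplicity p (card H) + multiplicity p (order G)"
    using multiplicity_card_set_mult[OF H P_sub _ _ p] card_P p by simp
  moreover have "multiplicity p (card (H <#> P)) \<le> multiplicity p (order G)"
    using dvd order_gt_0_iff_finite fin by (simp add: dvd_imp_multiplicity_le)
  ultimately show ?thesis by linarith
qed

lemma (in group) multiplicity_card_set_mult_le:
  assumes fin: "finite (carrier G)" and H: "subgroup H G" and K: "subgroup K G"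
    and hyp: "\<And>p P. sylow_subgroup G p P \<Longrightarrow> card (H <#> P) dvd order G"
    and p: "Factorial_Ring.prime p"
  shows "multiplicity p (card (H <#> K)) \<le> multiplicity p (order G)"
proof -
  let ?v = "multiplicity p"
  have finite: "finite S" if "subgroup S G" for S
    using that fin subgroup.subset finite_subset by blast
  have pos: "card S \<noteq> 0" if "subgroup S G" for S
    using subgroup.finite_imp_card_positive[OF that fin] by simp
  obtain R where R: "subgroup R G" and R_K: "R \<subseteq> K" and card_R: "card R = p ^ ?v (card K)"
    using sylow_subgroup_of_subgroup[OF fin p K] .
  obtain P where P: "sylow_subgroup G p P" and R_P: "R \<subseteq> P"
    using p_subgroup_le_sylow_subgroup[OF fin p R card_R] by blast
  then have P_sub: "subgroup P G" and card_P: "card P = p ^ ?v (order G)"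
    unfolding sylow_subgroup_def by auto
  have HP: "subgroup (H \<inter> P) G" using subgroups_Inter_pair[OF H P_sub] .
  have "p ^ ?v (card H) dvd card (H \<inter> P)"
    using multiplicity_card_le_card_Int_sylow[OF fin H P hyp[OF P]] by (rule multiplicity_dvd')
  then have "p ^ ?v (card H) \<le> card (H \<inter> P)" using pos[OF HP] by (simp add: dvd_imp_le)
  then have "p ^ (?v (card H) + ?v (card K)) \<le> card (H \<inter> P) * card R"
    using card_R by (simp add: power_add)
  also have "\<dots> \<le> card P * card (H \<inter> R)"
    using card_Int_mult_card_le[OF H P_sub R R_P finite[OF P_sub]] .
  also have "\<dots> \<le> p ^ ?v (order G) * p ^ ?v (card (H \<inter> K))"
  proof -
    have "card (H \<inter> R) dvd p ^ ?v (card K)"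
      unfolding card_R[symmetric] by (rule card_subgroup_dvd[OF subgroups_Inter_pair[OF H R] R]) auto
    moreover have "card (H \<inter> R) dvd card (H \<inter> K)"
      using R_K by (intro card_subgroup_dvd subgroups_Inter_pair H R K) auto
    ultimately have "card (H \<inter> R) \<le> p ^ ?v (card (H \<inter> K))"
      using prime_power_dvd_le_multiplicity[OF p] pos[OF subgroups_Inter_pair[OF H K]] by blast
    then show ?thesis using card_P by simp
  qed
  finally have "p ^ (?v (card H) + ?v (card K)) \<le> p ^ (?v (order G) + ?v (card (H \<inter> K)))"
    by (simp add: power_add)
  then have "?v (card H) + ?v (card K) \<le> ?v (order G) + ?v (card (H \<inter> K))"
    by (rule power_le_imp_le_exp[OF prime_gt_1_nat[OF p]])
  moreover have "?v (card (H <#> K)) + ?v (card (H \<inter> K)) = ?v (card H) + ?v (card K)"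
    using multiplicity_card_set_mult[OF H K finite[OF H] finite[OF K]] p by simp
  ultimately show ?thesis by linarith
qed

theorem mainTheorem10:
  fixes G :: "('a, 'b) monoid_scheme" and H :: "'a set"
  assumes "group G" and "finite (carrier G)" and "subgroup H G"
    and "\<And>p P. sylow_subgroup G p P \<Longrightarrow> card (H <#>\<^bsub>G\<^esub> P) dvd order G"
  shows "\<And>K. subgroup K G \<Longrightarrow> card (H <#>\<^bsub>G\<^esub> K) dvd order G"
proof -
  interpret group G by fact
  fix K assume K: "subgroup K G"
  have "finite (H <#>\<^bsub>G\<^esub> K)"
    using assms(2) set_mult_closed[OF subgroup.subset[OF assms(3)] subgroup.subset[OF K]]
    by (rule finite_subset[rotated])
  then have "card (H <#>\<^bsub>G\<^esub> K) \<noteq> 0"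
    using subgroup.one_closed[OF assms(3)] subgroup.one_closed[OF K]
    by (auto simp: card_eq_0_iff set_mult_def)
  then show "card (H <#>\<^bsub>G\<^esub> K) dvd order G"
    using multiplicity_card_set_mult_le[OF assms(2,3) K assms(4)]
    by (rule multiplicity_le_imp_dvd)
qed

end
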